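(* Fix a set $A$, a set $V(A)$ of "objects", a binary relation $\trianglelefteq$ on objects, and a binary relation $\sqsubset$ on objects (with reflexive closure $\sqsubseteq$) satisfying: (i) if $x \trianglelefteq y$ and $y \sqsubset z$ then $x \trianglelefteq z$; (ii) $\sqsubset$ is well-founded on $V(A)$, i.e., there is no sequence $f$ with $f(i)\in V(A)$ and $f(i+1)\sqsubset f(i)$ for all $i$; (iii) $\sqsubset$ is transitive; (iv) if $x \sqsubset y$ and $y \in V(A)$ then $x \in V(A)$. Let $f:\mathbb{N}\to$ objects with $f(0)\in V(A)$ and $f$ bad w.r.t. $\trianglelefteq$. Then there exists a sequence $g$ such that for every $i$ there is $j$ with $g(i)\sqsubseteq f(j)$, $g$ is minimal at $0$, and $g$ is bad w.r.t. $\trianglelefteq$.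
   Context: Sequences are functions $\mathbb{N}\to$ objects. A sequence $h$ is good w.r.t. $\trianglelefteq$ if there are $i<j$ with $h(i)\trianglelefteq h(j)$, and bad otherwise. A sequence $f$ is minimal at $n$ if for every sequence $g$ such that $g(i)=f(i)$ for all $i<n$, $g(n)\sqsubset f(n)$, and for every $i\ge n$ there exists $j\ge n$ with $g(i)\sqsubseteq f(j)$, the sequence $g$ is good w.r.t. $\trianglelefteq$. *)

theory Defs
  imports Main
begin

definition good :: "('a \<Rightarrow> 'a \<Rightarrow> bool) \<Rightarrow> (nat \<Rightarrow> 'a) \<Rightarrow> bool" where
  "good P h \<longleftrightarrow> (\<exists>i j. i < j \<and> P (h i) (h j))"

definition bad :: "('a \<Rightarrow> 'a \<Rightarrow> bool) \<Rightarrow> (nat \<Rightarrow> 'a) \<Rightarrow> bool" where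
  "bad P h \<longleftrightarrow> \<not> good P h"

definition reflc :: "('a \<Rightarrow> 'a \<Rightarrow> bool) \<Rightarrow> 'a \<Rightarrow> 'a \<Rightarrow> bool" where
  "reflc sq x y \<longleftrightarrow> sq x y \<or> x = y"

definition minimal_at ::
  "('a \<Rightarrow> 'a \<Rightarrow> bool) \<Rightarrow> ('a \<Rightarrow> 'a \<Rightarrow> bool) \<Rightarrow> (nat \<Rightarrow> 'a) \<Rightarrow> nat \<Rightarrow> bool" where
  "minimal_at P sq f n \<longleftrightarrow>
     (\<forall>g. (\<forall>i<n. g i = f i) \<and> sq (g n) (f n) \<and>
          (\<forall>i\<ge>n. \<exists>j\<ge>n. reflc sq (g i) (f j)) \<longrightarrow> good P g)"

end

theory Submission
  imports Defs
begin

text \<open>Among all bad sequences dominated by \<open>f\<close> and starting in \<open>V A\<close> (a nonempty family,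
  since \<open>f\<close> itself belongs to it), choose one whose first element is \<open>\<sqsubset>\<close>-minimal; this is
  possible because \<open>\<sqsubset>\<close> is well-founded on \<open>V A\<close>. Any sequence that is strictly smaller at \<open>0\<close>
  and dominated by it is again dominated by \<open>f\<close> and starts in \<open>V A\<close>, so by minimality it
  cannot be bad.\<close>

definition dominated :: "('a \<Rightarrow> 'a \<Rightarrow> bool) \<Rightarrow> (nat \<Rightarrow> 'a) \<Rightarrow> (nat \<Rightarrow> 'a) \<Rightarrow> bool" where
  "dominated sq g f \<longleftrightarrow> (\<forall>i. \<exists>j. reflc sq (g i) (f j))"

lemma reflc_trans:
  assumes "\<And>x y z. sq x y \<Longrightarrow> sq y z \<Longrightarrow> sq x z"
    and "reflc sq x y" and "reflc sq y z"
  shows "reflc sq x z"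
  using assms unfolding reflc_def by metis

lemma dominated_trans:
  assumes "\<And>x y z. sq x y \<Longrightarrow> sq y z \<Longrightarrow> sq x z"
    and "dominated sq h g" and "dominated sq g f"
  shows "dominated sq h f"
  using assms reflc_trans[of sq] unfolding dominated_def by metis

lemma dominated_refl: "dominated sq f f"
  unfolding dominated_def reflc_def by blast

lemma wf_restrict_if_no_descending_chain:
  assumes "\<not> (\<exists>h. \<forall>i. h i \<in> X \<and> sq (h (Suc i)) (h i))"
  shows "wf {(x, y). sq x y \<and> x \<in> X \<and> y \<in> X}"
  unfolding wf_iff_no_infinite_down_chain
proof
  assume "\<exists>h. \<forall>i. (h (Suc i), h i) \<in> {(x, y). sq x y \<and> x \<in> X \<and> y \<in> X}"
  then have "\<exists>h. \<forall>i. h i \<in> X \<and> sq (h (Suc i)) (h i)" by auto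
  with assms show False ..
qed

lemma minimal_at_0I:
  assumes trans: "\<And>x y z. sq x y \<Longrightarrow> sq y z \<Longrightarrow> sq x z"
    and down: "\<And>x y. sq x y \<Longrightarrow> y \<in> X \<Longrightarrow> x \<in> X"
    and g0: "g 0 \<in> X" and g_dom: "dominated sq g f"
    and no_smaller_bad: "\<And>h. bad P h \<Longrightarrow> dominated sq h f \<Longrightarrow> h 0 \<in> X \<Longrightarrow> \<not> sq (h 0) (g 0)"
  shows "minimal_at P sq g 0"
  unfolding minimal_at_def
proof (intro allI impI)
  fix h
  assume "(\<forall>i<0. h i = g i) \<and> sq (h 0) (g 0) \<and> (\<forall>i\<ge>0. \<exists>j\<ge>0. reflc sq (h i) (g j))"
  then have smaller: "sq (h 0) (g 0)" and h_dom: "dominated sq h g"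
    unfolding dominated_def by auto
  have "dominated sq h f" using trans h_dom g_dom by (rule dominated_trans)
  moreover have "h 0 \<in> X" using down smaller g0 .
  ultimately show "good P h" using no_smaller_bad smaller unfolding bad_def by blast
qed

theorem lemma5:
  fixes A :: "'b set" and V :: "'b set \<Rightarrow> 'a set"
    and P :: "'a \<Rightarrow> 'a \<Rightarrow> bool" and sq :: "'a \<Rightarrow> 'a \<Rightarrow> bool"
    and f :: "nat \<Rightarrow> 'a"
  assumes mono: "\<And>x y z. P x y \<Longrightarrow> sq y z \<Longrightarrow> P x z"
    and wf: "\<not> (\<exists>h. \<forall>i. h i \<in> V A \<and> sq (h (Suc i)) (h i))"
    and trans: "\<And>x y z. sq x y \<Longrightarrow> sq y z \<Longrightarrow> sq x z"
    and down: "\<And>x y. sq x y \<Longrightarrow> y \<in> V A \<Longrightarrow> x \<in> V A"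
    and f0: "f 0 \<in> V A"
    and fbad: "bad P f"
  shows "\<exists>g. (\<forall>i. \<exists>j. reflc sq (g i) (f j)) \<and> minimal_at P sq g 0 \<and> bad P g"
proof -
  define r where "r = {(x, y). sq x y \<and> x \<in> V A \<and> y \<in> V A}"
  define S where "S = {h 0 | h. bad P h \<and> dominated sq h f \<and> h 0 \<in> V A}"
  have "wf r" unfolding r_def using wf by (rule wf_restrict_if_no_descending_chain)
  moreover have "f 0 \<in> S" unfolding S_def using f0 fbad dominated_refl by blast
  ultimately obtain z where "z \<in> S" and z_min: "\<And>y. (y, z) \<in> r \<Longrightarrow> y \<notin> S"
    unfolding wf_eq_minimal by blast
  then obtain g where g: "bad P g" "dominated sq g f" "g 0 \<in> V A" and "g 0 = z"
    unfolding S_def by blast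
  have "minimal_at P sq g 0"
  proof (rule minimal_at_0I[OF trans down g(3,2)])
    fix h assume "bad P h" "dominated sq h f" "h 0 \<in> V A"
    then have "h 0 \<in> S" unfolding S_def by blast
    with z_min show "\<not> sq (h 0) (g 0)"
      using \<open>g 0 = z\<close> g(3) \<open>h 0 \<in> V A\<close> unfolding r_def by blast
  qed
  with g show ?thesis unfolding dominated_def by blast
qed

end
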